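(* Let $n\geq 4$, let $\mathfrak g=sl_n(\mathbb R)$ and let $G$ be the connected, simply connected Lie group with Lie algebra $\mathfrak g$ (the two-sheeted covering of $SL_n(\mathbb R)$), acting on $\mathfrak g$ by the adjoint action. Let $B\subset G$ be the inverse image in $G$ of the subgroup of upper triangular matrices of $SL_n(\mathbb R)$. Let $k$ be an integer with $2\leq k\leq n/2$ and $\varepsilon\in\{1,-1\}$, put $$X_{k,\varepsilon}=\sum_{i=1}^{k-1}E_{n+1-i,\,i}+\varepsilon\,E_{n+1-k,\,k}\in\mathfrak g,$$ where $E_{a,b}$ denotes the elementary matrix with a $1$ in position $(a,b)$, and let $O_{k,\varepsilon}=G\cdot X_{k,\varepsilon}$ be its adjoint orbit. Then the $B$-orbit $B\cdot X_{k,\varepsilon}$ is the unique dense $B$-orbit contained in $O_{k,\varepsilon}$.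
   Context: In the paper's notation, with the usual root system $\varepsilon_i-\varepsilon_j$ of $sl_n$, simple roots $\alpha_k=\varepsilon_k-\varepsilon_{k+1}$, root vectors $X_{\varepsilon_i-\varepsilon_j}=E_{i,j}$, $\beta_{i,j}=\alpha_i+\dots+\alpha_j$ and $\beta_i=\beta_{i,n-i}$, one has $X_{-\beta_i}=E_{n+1-i,i}$, so $X_{k,\varepsilon}=\sum_{i=1}^{k-1}X_{-\beta_i}+\varepsilon X_{-\beta_k}$. The orbits $O_{k,\varepsilon}$ ($2\le k\le n/2$) are the non-minimal spherical nilpotent orbits of $sl_n(\mathbb R)$. *)

theory Defs
  imports "HOL-Analysis.Analysis" "Jordan_Normal_Form.Determinant"
begin

text \<open>Real n x n matrices are Jordan_Normal_Form matrices of dimension n x n;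
  indices are 0-based internally, the elementary matrix below takes 1-based
  indices as in the paper.\<close>

definition sl :: "nat \<Rightarrow> real mat set" where
  "sl n = {A \<in> carrier_mat n n. (\<Sum>i<n. A $$ (i,i)) = 0}"

definition SL :: "nat \<Rightarrow> real mat set" where
  "SL n = {g \<in> carrier_mat n n. det g = 1}"

text \<open>Image in SL_n(R) of the Borel subgroup B: upper triangular matrices of SL_n(R).\<close>
definition Borel :: "nat \<Rightarrow> real mat set" where
  "Borel n = {g \<in> SL n. upper_triangular g}"

definition mat_inv :: "real mat \<Rightarrow> real mat" where
  "mat_inv g = (SOME h. inverts_mat g h \<and> inverts_mat h g)"

definition Ad :: "real mat \<Rightarrow> real mat \<Rightarrow> real mat" where
  "Ad g X = g * X * mat_inv g"

definition orbit :: "real mat set \<Rightarrow> real mat \<Rightarrow> real mat set" where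
  "orbit H X = (\<lambda>g. Ad g X) ` H"

definition Emat :: "nat \<Rightarrow> nat \<Rightarrow> nat \<Rightarrow> real mat" where
  "Emat n a b = mat n n (\<lambda>(i,j). if i + 1 = a \<and> j + 1 = b then 1 else 0)"

definition Xke :: "nat \<Rightarrow> nat \<Rightarrow> real \<Rightarrow> real mat" where
  "Xke n k eps = foldr (+) (map (\<lambda>i. Emat n (n + 1 - i) i) [1..<k]) (eps \<cdot>\<^sub>m Emat n (n + 1 - k) k)"

text \<open>Embedding of n x n matrices into the product space (nat x nat => real),
  which carries the product topology; on n x n matrices this is the
  Euclidean topology of the Lie algebra.\<close>
definition mat_coords :: "real mat \<Rightarrow> (nat \<times> nat \<Rightarrow> real)" where
  "mat_coords A = (\<lambda>(i,j). if i < dim_row A \<and> j < dim_col A then A $$ (i,j) else 0)"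

definition mat_dense_in :: "real mat set \<Rightarrow> real mat set \<Rightarrow> bool" where
  "mat_dense_in S T \<longleftrightarrow> mat_coords ` T \<subseteq> closure (mat_coords ` S)"

end

theory Submission
  imports Defs
begin

text \<open>Let \<open>Y = Ad g X\<close>. If the lower left minors of \<open>Y\<close> of orders \<open>1, \<dots>, k\<close> do not
  vanish, one builds column by column an upper triangular \<open>b\<close> with \<open>Y b = b X\<close>: the first
  \<open>n - k\<close> columns are vectors adapted to the flag cut out by these minors (for the columns
  beyond \<open>k\<close>, vectors in the kernel of \<open>Y\<close>), and the last \<open>k\<close> are images of the first ones
  under \<open>Y\<close>. When \<open>n > 2k\<close> the sign of \<open>det b\<close> can be changed by a diagonal matrix commuting
  with \<open>X\<close>; when \<open>n = 2k\<close> every matrix commuting with \<open>X\<close> is block lower triangular with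
  conjugate diagonal blocks, so \<open>det b\<close> has the sign of \<open>det g\<close>. Rescaling \<open>b\<close> to
  determinant one puts \<open>Y\<close> in \<open>B \<cdot> X\<close>.

  Density: on the segment \<open>G t = g + t (1 - g)\<close> from \<open>g\<close> to the identity, the minors of
  \<open>Ad (G t) X\<close> are, up to a power of \<open>det (G t)\<close>, polynomials in \<open>t\<close> that do not vanish at
  \<open>t = 1\<close>, hence not for small \<open>t \<noteq> 0\<close>. Uniqueness: nonvanishing of the minors is an open condition that holds at \<open>X\<close>,
  so every dense \<open>B\<close>-orbit in the \<open>SL\<^sub>n\<close>-orbit meets \<open>B \<cdot> X\<close>.\<close>

section \<open>Inverses and the adjoint action\<close>

lemma index_mult_mat_sum:
  assumes "A \<in> carrier_mat nr m" "B \<in> carrier_mat m nc" "i < nr" "j < nc"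
  shows "(A * B) $$ (i,j) = (\<Sum>l<m. A $$ (i,l) * B $$ (l,j))"
  using assms by (auto simp: scalar_prod_def lessThan_atLeast0 intro!: sum.cong)

lemma smult_smult_mat: "a \<cdot>\<^sub>m (b \<cdot>\<^sub>m A) = (a * b) \<cdot>\<^sub>m (A :: 'a :: semigroup_mult mat)"
  by (rule eq_matI) (auto simp: mult.assoc)

lemma one_smult_mat [simp]: "1 \<cdot>\<^sub>m A = (A :: 'a :: monoid_mult mat)"
  by (rule eq_matI) auto

lemma mat_inv_unique:
  assumes g: "g \<in> carrier_mat n n" and h: "h \<in> carrier_mat n n"
    and gh: "g * h = 1\<^sub>m n" and hg: "h * g = 1\<^sub>m n"
  shows "mat_inv g = h"
proof -
  have "inverts_mat g (mat_inv g) \<and> inverts_mat (mat_inv g) g"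
    unfolding mat_inv_def by (rule someI[of _ h]) (use g h gh hg in \<open>simp add: inverts_mat_def\<close>)
  then have gh': "g * mat_inv g = 1\<^sub>m n" and hg': "mat_inv g * g = 1\<^sub>m (dim_row (mat_inv g))"
    using g by (auto simp: inverts_mat_def)
  have h': "mat_inv g \<in> carrier_mat n n"
    using gh' hg' g by (metis carrier_matD(2) carrier_matI index_mult_mat(2,3) index_one_mat(2,3))
  have "mat_inv g = mat_inv g * (g * h)" using gh h' by simp
  also have "\<dots> = (mat_inv g * g) * h" using h' g h by simp
  also have "\<dots> = h" using hg' h' h by simp
  finally show ?thesis .
qed

lemma adj_mat_inverse:
  fixes g :: "'a :: field mat"
  assumes g: "g \<in> carrier_mat n n" and d: "det g \<noteq> 0"
  shows "g * ((1 / det g) \<cdot>\<^sub>m adj_mat g) = 1\<^sub>m n" "(1 / det g) \<cdot>\<^sub>m adj_mat g * g = 1\<^sub>m n"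
proof -
  note adj = adj_mat[OF g]
  have unit: "(1 / det g) \<cdot>\<^sub>m (det g \<cdot>\<^sub>m 1\<^sub>m n) = 1\<^sub>m n"
    using d by (simp add: smult_smult_mat)
  show "g * ((1 / det g) \<cdot>\<^sub>m adj_mat g) = 1\<^sub>m n"
    using mult_smult_distrib[OF g adj(1)] adj(2) unit by simp
  show "(1 / det g) \<cdot>\<^sub>m adj_mat g * g = 1\<^sub>m n"
    using mult_smult_assoc_mat[OF adj(1) g] adj(3) unit by simp
qed

lemma mat_inv_adj:
  "g \<in> carrier_mat n n \<Longrightarrow> det g \<noteq> 0 \<Longrightarrow> mat_inv g = (1 / det g) \<cdot>\<^sub>m adj_mat g"
  using adj_mat(1) adj_mat_inverse by (intro mat_inv_unique) auto

lemma mat_inv_carrier: "g \<in> carrier_mat n n \<Longrightarrow> det g \<noteq> 0 \<Longrightarrow> mat_inv g \<in> carrier_mat n n"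
  using mat_inv_adj adj_mat(1) by (metis smult_carrier_mat)

lemma mat_inv_right: "g \<in> carrier_mat n n \<Longrightarrow> det g \<noteq> 0 \<Longrightarrow> g * mat_inv g = 1\<^sub>m n"
  using mat_inv_adj adj_mat_inverse(1) by metis

lemma mat_inv_left: "g \<in> carrier_mat n n \<Longrightarrow> det g \<noteq> 0 \<Longrightarrow> mat_inv g * g = 1\<^sub>m n"
  using mat_inv_adj adj_mat_inverse(2) by metis

lemma det_mat_inv:
  assumes "g \<in> carrier_mat n n" "det g \<noteq> 0"
  shows "det (mat_inv g) = 1 / det g"
proof -
  have "det g * det (mat_inv g) = 1"
    using det_mult[OF assms(1) mat_inv_carrier[OF assms]] mat_inv_right[OF assms] by simp
  then show ?thesis using assms(2) by (simp add: field_simps)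
qed

lemma mat_inv_mult:
  assumes g: "g \<in> carrier_mat n n" "det g \<noteq> 0" and h: "h \<in> carrier_mat n n" "det h \<noteq> 0"
  shows "mat_inv (g * h) = mat_inv h * mat_inv g"
proof (rule mat_inv_unique)
  note gi = mat_inv_carrier[OF g] and hi = mat_inv_carrier[OF h]
  show "g * h \<in> carrier_mat n n" "mat_inv h * mat_inv g \<in> carrier_mat n n" using g h gi hi by auto
  have "g * h * (mat_inv h * mat_inv g) = g * (h * mat_inv h) * mat_inv g"
    using g h gi hi by (simp add: assoc_mult_mat[of _ n n _ n _ n])
  then show "g * h * (mat_inv h * mat_inv g) = 1\<^sub>m n"
    using g h gi by (simp add: mat_inv_right)
  have "mat_inv h * mat_inv g * (g * h) = mat_inv h * (mat_inv g * g) * h"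
    using g h gi hi by (simp add: assoc_mult_mat[of _ n n _ n _ n])
  then show "mat_inv h * mat_inv g * (g * h) = 1\<^sub>m n"
    using g h hi by (simp add: mat_inv_left)
qed

lemma mat_inv_smult:
  assumes g: "g \<in> carrier_mat n n" "det g \<noteq> 0" and c: "c \<noteq> 0"
  shows "mat_inv (c \<cdot>\<^sub>m g) = (1 / c) \<cdot>\<^sub>m mat_inv g"
  using g c mat_inv_carrier[OF g] mat_inv_right[OF g] mat_inv_left[OF g]
  by (intro mat_inv_unique)
     (auto simp: mult_smult_distrib[of _ n n _ n] mult_smult_assoc_mat[of _ n n _ n])

lemma Ad_carrier:
  "g \<in> carrier_mat n n \<Longrightarrow> det g \<noteq> 0 \<Longrightarrow> Y \<in> carrier_mat n n \<Longrightarrow> Ad g Y \<in> carrier_mat n n"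
  unfolding Ad_def using mat_inv_carrier by (metis mult_carrier_mat)

lemma Ad_Ad:
  assumes g: "g \<in> carrier_mat n n" "det g \<noteq> 0" and h: "h \<in> carrier_mat n n" "det h \<noteq> 0"
    and Y: "Y \<in> carrier_mat n n"
  shows "Ad g (Ad h Y) = Ad (g * h) Y"
  using g h Y mat_inv_carrier[OF g] mat_inv_carrier[OF h]
  by (simp add: Ad_def mat_inv_mult assoc_mult_mat[of _ n n _ n _ n])

lemma Ad_one: "Y \<in> carrier_mat n n \<Longrightarrow> Ad (1\<^sub>m n) Y = Y"
  using mat_inv_unique[of "1\<^sub>m n" n "1\<^sub>m n"] by (simp add: Ad_def)

lemma Ad_smult:
  assumes g: "g \<in> carrier_mat n n" "det g \<noteq> 0" and c: "c \<noteq> 0" and Y: "Y \<in> carrier_mat n n"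
  shows "Ad (c \<cdot>\<^sub>m g) Y = Ad g Y"
  using g c Y mat_inv_carrier[OF g]
  by (simp add: Ad_def mat_inv_smult mult_smult_distrib[of _ n n _ n] mult_smult_assoc_mat[of _ n n _ n]
      smult_smult_mat)

lemma Ad_eq_if_intertwines:
  assumes b: "b \<in> carrier_mat n n" "det b \<noteq> 0" and X: "X \<in> carrier_mat n n"
    and Y: "Y \<in> carrier_mat n n" and YbX: "Y * b = b * X"
  shows "Ad b X = Y"
proof -
  have "Ad b X = Y * b * mat_inv b" unfolding Ad_def YbX ..
  also have "\<dots> = Y" using Y b mat_inv_carrier[OF b] mat_inv_right[OF b] by simp
  finally show ?thesis .
qed

lemma commutes_if_Ad_intertwines:
  assumes g: "g \<in> carrier_mat n n" "det g \<noteq> 0" and b: "b \<in> carrier_mat n n"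
    and X: "X \<in> carrier_mat n n" and eq: "Ad g X * b = b * X"
  shows "X * (mat_inv g * b) = (mat_inv g * b) * X"
proof -
  note gi = mat_inv_carrier[OF g]
  have "mat_inv g * (Ad g X * b) = (mat_inv g * g) * X * (mat_inv g * b)"
    using g gi b X unfolding Ad_def by (simp add: assoc_mult_mat[of _ n n _ n _ n])
  also have "\<dots> = X * (mat_inv g * b)" using gi b X mat_inv_left[OF g] by simp
  finally have "X * (mat_inv g * b) = mat_inv g * (Ad g X * b)" ..
  also have "\<dots> = (mat_inv g * b) * X"
    using gi b X unfolding eq by (simp add: assoc_mult_mat[of _ n n _ n _ n])
  finally show ?thesis .
qed

locale invertible_mat_group =
  fixes n :: nat and H :: "real mat set"
  assumes group_carrier: "h \<in> H \<Longrightarrow> h \<in> carrier_mat n n"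
    and group_det: "h \<in> H \<Longrightarrow> det h \<noteq> 0"
    and group_mult: "a \<in> H \<Longrightarrow> b \<in> H \<Longrightarrow> a * b \<in> H"
    and group_inv: "a \<in> H \<Longrightarrow> mat_inv a \<in> H"
begin

lemma orbit_member_eq:
  assumes X: "X \<in> carrier_mat n n" and Y: "Y \<in> orbit H X"
  shows "orbit H Y = orbit H X"
proof -
  obtain h where h: "h \<in> H" "Y = Ad h X" using Y by (auto simp: orbit_def)
  have hc: "h \<in> carrier_mat n n" "det h \<noteq> 0" using h(1) group_carrier group_det by auto
  have orbit_Ad: "orbit H (Ad a Z) \<subseteq> orbit H Z" if a: "a \<in> H" and Z: "Z \<in> carrier_mat n n" for a Z
  proof
    fix W assume "W \<in> orbit H (Ad a Z)"
    then obtain c where c: "c \<in> H" "W = Ad c (Ad a Z)" by (auto simp: orbit_def)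
    then have "W = Ad (c * a) Z"
      using Ad_Ad[of c n a Z] a c(1) Z group_carrier group_det by blast
    then show "W \<in> orbit H Z" using group_mult[OF c(1) a] by (auto simp: orbit_def)
  qed
  have "X = Ad (mat_inv h) Y"
    using Ad_Ad[OF mat_inv_carrier[OF hc] _ hc X] h(2) hc X mat_inv_left[OF hc]
    by (simp add: det_mat_inv Ad_one)
  then have "orbit H X \<subseteq> orbit H Y"
    using orbit_Ad[of "mat_inv h" Y] group_inv[OF h(1)] Ad_carrier[OF hc X] h(2) by simp
  moreover have "orbit H Y \<subseteq> orbit H X" using orbit_Ad[OF h(1) X] h(2) by simp
  ultimately show ?thesis by blast
qed

lemma orbits_eq_if_intersect:
  assumes "X \<in> carrier_mat n n" "Y \<in> carrier_mat n n" "Z \<in> orbit H X" "Z \<in> orbit H Y"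
  shows "orbit H Y = orbit H X"
  using orbit_member_eq assms by metis

end

section \<open>Upper triangular matrices and the Borel subgroup\<close>

lemma det_upper_triangular_diag:
  fixes A :: "'a :: comm_ring_1 mat"
  assumes "upper_triangular A" "A \<in> carrier_mat n n"
  shows "det A = (\<Prod>i<n. A $$ (i,i))"
  using det_upper_triangular[OF assms] assms(2)
  by (simp add: diag_mat_def prod.list_conv_set_nth lessThan_atLeast0)

lemma upper_triangular_mult:
  fixes A B :: "'a :: semiring_0 mat"
  assumes A: "A \<in> carrier_mat n n" "upper_triangular A" and B: "B \<in> carrier_mat n n" "upper_triangular B"
  shows "upper_triangular (A * B)"
proof (rule upper_triangularI)
  fix i j assume ij: "j < i" "i < dim_row (A * B)"
  have "A $$ (i,l) * B $$ (l,j) = 0" if "l < n" for l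
  proof (cases "l < i")
    case True then show ?thesis using upper_triangularD[OF A(2) True] A(1) ij by simp
  next
    case False then show ?thesis using upper_triangularD[OF B(2), of j l] B(1) ij \<open>l < n\<close> by simp
  qed
  moreover have "(A * B) $$ (i,j) = (\<Sum>l<n. A $$ (i,l) * B $$ (l,j))"
    using ij A(1) by (intro index_mult_mat_sum[OF A(1) B(1)]) auto
  ultimately show "(A * B) $$ (i,j) = 0" by simp
qed

lemma upper_triangular_left_inverse:
  fixes b h :: "'a :: field mat"
  assumes b: "b \<in> carrier_mat n n" "upper_triangular b" and h: "h \<in> carrier_mat n n"
    and hb: "h * b = 1\<^sub>m n"
  shows "upper_triangular h"
proof -
  have "det h * det b = 1" using det_mult[OF h b(1)] hb by simp
  then have "(\<Prod>i<n. b $$ (i,i)) \<noteq> 0"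
    using det_upper_triangular_diag[OF b(2,1)] by (metis mult_zero_right zero_neq_one)
  then have diag: "b $$ (j,j) \<noteq> 0" if "j < n" for j
    using that by (metis finite_lessThan lessThan_iff prod_zero_iff)
  have "\<forall>i. j < i \<longrightarrow> i < n \<longrightarrow> h $$ (i,j) = 0" for j
  proof (induction j rule: less_induct)
    case (less j)
    show ?case
    proof (intro allI impI)
      fix i assume ij: "j < i" "i < n"
      have "(h * b) $$ (i,j) = (\<Sum>l<n. h $$ (i,l) * b $$ (l,j))"
        using ij by (intro index_mult_mat_sum[OF h b(1)]) auto
      also have "\<dots> = (\<Sum>l<n. if l = j then h $$ (i,j) * b $$ (j,j) else 0)"
      proof (rule sum.cong[OF refl])
        fix l assume "l \<in> {..<n}"
        then show "h $$ (i,l) * b $$ (l,j) = (if l = j then h $$ (i,j) * b $$ (j,j) else 0)"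
          using less[of l] upper_triangularD[OF b(2), of j l] b(1) ij
          by (cases l j rule: linorder_cases) auto
      qed
      also have "\<dots> = h $$ (i,j) * b $$ (j,j)" using ij by simp
      finally show "h $$ (i,j) = 0" using hb ij diag[of j] by simp
    qed
  qed
  then show ?thesis using h by (auto simp: upper_triangular_def)
qed

lemma four_block_mat_eqD:
  assumes "A \<in> carrier_mat nr1 nc1" "B \<in> carrier_mat nr1 nc2" "C \<in> carrier_mat nr2 nc1" "D \<in> carrier_mat nr2 nc2"
    and "A' \<in> carrier_mat nr1 nc1" "B' \<in> carrier_mat nr1 nc2" "C' \<in> carrier_mat nr2 nc1" "D' \<in> carrier_mat nr2 nc2"
    and eq: "four_block_mat A B C D = four_block_mat A' B' C' D'"
  shows "A = A'" "B = B'" "C = C'" "D = D'"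
proof -
  have idx: "four_block_mat A B C D $$ (i,j) = four_block_mat A' B' C' D' $$ (i,j)" for i j
    using eq by simp
  show "A = A'"
  proof (rule eq_matI)
    fix i j assume "i < dim_row A'" "j < dim_col A'"
    then show "A $$ (i,j) = A' $$ (i,j)" using idx[of i j] assms(1-8) by (simp add: index_mat_four_block)
  qed (use assms in auto)
  show "B = B'"
  proof (rule eq_matI)
    fix i j assume "i < dim_row B'" "j < dim_col B'"
    then show "B $$ (i,j) = B' $$ (i,j)" using idx[of i "nc1 + j"] assms(1-8) by (simp add: index_mat_four_block)
  qed (use assms in auto)
  show "C = C'"
  proof (rule eq_matI)
    fix i j assume "i < dim_row C'" "j < dim_col C'"
    then show "C $$ (i,j) = C' $$ (i,j)" using idx[of "nr1 + i" j] assms(1-8) by (simp add: index_mat_four_block)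
  qed (use assms in auto)
  show "D = D'"
  proof (rule eq_matI)
    fix i j assume "i < dim_row D'" "j < dim_col D'"
    then show "D $$ (i,j) = D' $$ (i,j)"
      using idx[of "nr1 + i" "nc1 + j"] assms(1-8) by (simp add: index_mat_four_block)
  qed (use assms in auto)
qed

lemma Borel_subset_SL: "Borel n \<subseteq> SL n"
  unfolding Borel_def by auto

interpretation Borel: invertible_mat_group n "Borel n"
proof
  fix a b assume "a \<in> Borel n" "b \<in> Borel n"
  then show "a * b \<in> Borel n"
    using det_mult[of a n b] upper_triangular_mult[of a n b] by (auto simp: Borel_def SL_def)
next
  fix a assume a: "a \<in> Borel n"
  then have ac: "a \<in> carrier_mat n n" "det a \<noteq> 0" "upper_triangular a"
    by (auto simp: Borel_def SL_def)
  then show "mat_inv a \<in> Borel n"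
    using a mat_inv_carrier[OF ac(1,2)] mat_inv_left[OF ac(1,2)] det_mat_inv[OF ac(1,2)]
      upper_triangular_left_inverse[OF ac(1,3)] by (auto simp: Borel_def SL_def)
qed (auto simp: Borel_def SL_def)

lemma det_normalized:
  fixes g :: "real mat"
  assumes g: "g \<in> carrier_mat n n" and n: "0 < n" and d: "det g > 0"
  shows "det ((1 / root n (det g)) \<cdot>\<^sub>m g) = 1"
  using g d real_root_pow_pos[OF n d] by (simp add: det_smult power_divide)

lemma Borel_orbit_if_intertwines:
  assumes b: "b \<in> carrier_mat n n" "upper_triangular b" "det b > 0" and n: "0 < n"
    and X: "X \<in> carrier_mat n n" and Y: "Y \<in> carrier_mat n n" and YbX: "Y * b = b * X"
  shows "Y \<in> orbit (Borel n) X"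
proof -
  let ?b = "(1 / root n (det b)) \<cdot>\<^sub>m b"
  have "upper_triangular ?b" using b(1,2) by (auto simp: upper_triangular_def)
  then have "?b \<in> Borel n" using det_normalized[OF b(1) n b(3)] b(1) by (simp add: Borel_def SL_def)
  moreover have "Ad ?b X = Ad b X"
    using Ad_smult[OF b(1) _ _ X] real_root_gt_zero[OF n b(3)] b(3) by simp
  ultimately show ?thesis using Ad_eq_if_intertwines[OF b(1) _ X Y YbX] b(3) by (auto simp: orbit_def)
qed

section \<open>Linear systems and lower left minors\<close>

lemma index_mult_mat_vec_sum:
  "M \<in> carrier_mat nr m \<Longrightarrow> v \<in> carrier_vec m \<Longrightarrow> r < nr \<Longrightarrow> (M *\<^sub>v v) $ r = (\<Sum>l<m. M $$ (r,l) * v $ l)"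
  by (auto simp: scalar_prod_def lessThan_atLeast0 intro!: sum.cong)

lemma linear_system_solvable:
  fixes M :: "'a :: field mat"
  assumes M: "M \<in> carrier_mat m m" and d: "det M \<noteq> 0"
  shows "\<exists>x. \<forall>r<m. (\<Sum>l<m. M $$ (r,l) * x l) = y r"
proof -
  let ?A = "(1 / det M) \<cdot>\<^sub>m adj_mat M"
  have A: "?A \<in> carrier_mat m m" using adj_mat(1)[OF M] by simp
  let ?x = "?A *\<^sub>v vec m y"
  have "(\<Sum>l<m. M $$ (r,l) * ?x $ l) = y r" if "r < m" for r
  proof -
    have "(\<Sum>l<m. M $$ (r,l) * ?x $ l) = (M *\<^sub>v ?x) $ r"
      using M A that by (intro index_mult_mat_vec_sum[symmetric]) auto
    also have "M *\<^sub>v ?x = (M * ?A) *\<^sub>v vec m y" using M A by simp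
    finally show ?thesis using adj_mat_inverse(1)[OF M d] that by simp
  qed
  then show ?thesis by blast
qed

lemma linear_system_kernel_trivial:
  fixes M :: "'a :: field mat"
  assumes M: "M \<in> carrier_mat m m" and d: "det M \<noteq> 0"
    and x: "\<And>r. r < m \<Longrightarrow> (\<Sum>l<m. M $$ (r,l) * x l) = 0" and l: "l < m"
  shows "x l = 0"
proof -
  let ?A = "(1 / det M) \<cdot>\<^sub>m adj_mat M"
  have A: "?A \<in> carrier_mat m m" using adj_mat(1)[OF M] by simp
  have "M *\<^sub>v vec m x = 0\<^sub>v m"
  proof (rule eq_vecI)
    fix i assume "i < dim_vec (0\<^sub>v m :: 'a vec)"
    then have i: "i < m" by simp
    have "(M *\<^sub>v vec m x) $ i = (\<Sum>l<m. M $$ (i,l) * vec m x $ l)"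
      using M i by (intro index_mult_mat_vec_sum) auto
    then show "(M *\<^sub>v vec m x) $ i = 0\<^sub>v m $ i" using x[OF i] i by simp
  qed (use M in simp)
  then have "(?A * M) *\<^sub>v vec m x = ?A *\<^sub>v 0\<^sub>v m" using A M by simp
  also have "\<dots> = 0\<^sub>v m" using A by (intro eq_vecI) (auto simp: scalar_prod_def)
  finally have "vec m x = 0\<^sub>v m" using adj_mat_inverse(2)[OF M d] by simp
  then show ?thesis using l by (metis index_vec index_zero_vec(1))
qed

definition lower_left :: "nat \<Rightarrow> nat \<Rightarrow> 'a mat \<Rightarrow> 'a mat" where
  "lower_left n j Y = mat j j (\<lambda>(r,c). Y $$ (n - j + r, c))"

lemma lower_left_carrier [simp]: "lower_left n j Y \<in> carrier_mat j j"
  by (simp add: lower_left_def)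

lemma lower_left_smult:
  "M \<in> carrier_mat n n \<Longrightarrow> j \<le> n \<Longrightarrow> lower_left n j (c \<cdot>\<^sub>m M) = c \<cdot>\<^sub>m lower_left n j M"
  unfolding lower_left_def by (rule eq_matI) auto

lemma sum_prefix_plus_unit:
  fixes f x :: "nat \<Rightarrow> 'a :: semiring_1"
  assumes "k \<le> j" "j < m"
  shows "(\<Sum>l<m. f l * (if l < k then x l else if l = j then 1 else 0)) = (\<Sum>l<k. f l * x l) + f j"
proof -
  have "(\<Sum>l<m. f l * (if l < k then x l else if l = j then 1 else 0))
      = (\<Sum>l<m. (if l < k then f l * x l else 0) + (if l = j then f j else 0))"
    by (rule sum.cong) (use assms in auto)
  also have "\<dots> = (\<Sum>l<m. if l < k then f l * x l else 0) + f j"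
    using assms by (simp add: sum.distrib)
  also have "(\<Sum>l<m. if l < k then f l * x l else 0) = (\<Sum>l<k. f l * x l)"
    using assms by (subst sum.mono_neutral_right[of "{..<m}" "{..<k}"]) auto
  finally show ?thesis .
qed

lemma vector_from_lower_left_minors:
  fixes Y :: "'a :: field mat"
  assumes Y: "Y \<in> carrier_mat n n" and j: "j < n"
    and D: "det (lower_left n j Y) \<noteq> 0" "det (lower_left n (Suc j) Y) \<noteq> 0"
  shows "\<exists>v. v j = 1 \<and> (\<forall>r>j. v r = 0)
    \<and> (\<forall>r. n - 1 - j < r \<longrightarrow> r < n \<longrightarrow> (\<Sum>l<n. Y $$ (r,l) * v l) = 0)
    \<and> (\<Sum>l<n. Y $$ (n - 1 - j, l) * v l) \<noteq> 0"
proof -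
  obtain x where x: "\<And>r. r < j \<Longrightarrow> (\<Sum>l<j. lower_left n j Y $$ (r,l) * x l) = - Y $$ (n - j + r, j)"
    using linear_system_solvable[OF lower_left_carrier D(1), of "\<lambda>r. - Y $$ (n - j + r, j)"] by blast
  define v where "v l = (if l < j then x l else if l = j then 1 else 0)" for l
  have Yv: "(\<Sum>l<m. f l * v l) = (\<Sum>l<j. f l * x l) + f j" if "j < m" for f m
    unfolding v_def by (rule sum_prefix_plus_unit[OF order.refl that])
  have rows: "(\<Sum>l<n. Y $$ (r,l) * v l) = 0" if r: "n - 1 - j < r" "r < n" for r
  proof -
    have "(\<Sum>l<j. Y $$ (r,l) * x l) = (\<Sum>l<j. lower_left n j Y $$ (r - (n - j), l) * x l)"
      using r by (intro sum.cong) (auto simp: lower_left_def)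
    also have "\<dots> = - Y $$ (r,j)" using x[of "r - (n - j)"] r j by simp
    finally show ?thesis using Yv[OF j] by simp
  qed
  have "(\<Sum>l<n. Y $$ (n - 1 - j, l) * v l) \<noteq> 0"
  proof
    assume z: "(\<Sum>l<n. Y $$ (n - 1 - j, l) * v l) = 0"
    have "v j = 0"
    proof (rule linear_system_kernel_trivial[OF lower_left_carrier D(2)])
      fix r assume r: "r < Suc j"
      have "(\<Sum>l<Suc j. lower_left n (Suc j) Y $$ (r,l) * v l) = (\<Sum>l<Suc j. Y $$ (n - 1 - j + r, l) * v l)"
        using r j by (intro sum.cong) (auto simp: lower_left_def)
      also have "\<dots> = (\<Sum>l<n. Y $$ (n - 1 - j + r, l) * v l)" using Yv[of "Suc j"] Yv[OF j] by simp
      also have "\<dots> = 0" using z rows[of "n - 1 - j + r"] r j by (cases "r = 0") auto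
      finally show "(\<Sum>l<Suc j. lower_left n (Suc j) Y $$ (r,l) * v l) = 0" .
    qed simp
    then show False by (simp add: v_def)
  qed
  then show ?thesis using rows by (intro exI[of _ v]) (auto simp: v_def)
qed

section \<open>Polynomial families and continuity of minors\<close>

definition polyfun :: "(real \<Rightarrow> real) \<Rightarrow> bool" where
  "polyfun f \<longleftrightarrow> (\<exists>p. \<forall>t. f t = poly p t)"

lemma polyfun_const [simp]: "polyfun (\<lambda>t. c)"
  unfolding polyfun_def by (rule exI[of _ "[:c:]"]) simp

lemma polyfun_id [simp]: "polyfun (\<lambda>t. t)"
  unfolding polyfun_def by (rule exI[of _ "[:0, 1:]"]) simp

lemma polyfun_add: "polyfun f \<Longrightarrow> polyfun g \<Longrightarrow> polyfun (\<lambda>t. f t + g t)"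
  unfolding polyfun_def by (metis poly_add)

lemma polyfun_mult: "polyfun f \<Longrightarrow> polyfun g \<Longrightarrow> polyfun (\<lambda>t. f t * g t)"
  unfolding polyfun_def by (metis poly_mult)

lemma polyfun_sum: "(\<And>x. x \<in> S \<Longrightarrow> polyfun (f x)) \<Longrightarrow> polyfun (\<lambda>t. \<Sum>x\<in>S. f x t)"
  by (induction S rule: infinite_finite_induct) (auto intro: polyfun_add)

lemma polyfun_prod: "(\<And>x. x \<in> S \<Longrightarrow> polyfun (f x)) \<Longrightarrow> polyfun (\<lambda>t. \<Prod>x\<in>S. f x t)"
  by (induction S rule: infinite_finite_induct) (auto intro: polyfun_mult)

lemma continuous_on_polyfun: "polyfun f \<Longrightarrow> continuous_on S f"
  unfolding polyfun_def by (metis continuous_on_id continuous_on_poly ext)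

lemma polyfun_eventually_nonzero:
  assumes f: "polyfun f" and a: "f a \<noteq> 0"
  shows "eventually (\<lambda>t. f t \<noteq> 0) (at x)"
proof -
  obtain p where p: "\<And>t. f t = poly p t" using f by (auto simp: polyfun_def)
  then have "finite {t. f t = 0}" using a poly_roots_finite[of p] by fastforce
  then have "eventually (\<lambda>t. t \<notin> {t. f t = 0}) (at x)"
    using islimpt_finite islimpt_iff_eventually by metis
  then show ?thesis by simp
qed

lemma polyfun_det:
  assumes "\<And>t. A t \<in> carrier_mat m m"
    and "\<And>i j. i < m \<Longrightarrow> j < m \<Longrightarrow> polyfun (\<lambda>t. A t $$ (i,j))"
  shows "polyfun (\<lambda>t. det (A t))"
proof -
  have "p i < m" if "p permutes {0..<m}" "i < m" for p i
    using that permutes_in_image[of p "{0..<m}" i] by auto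
  then have "polyfun (\<lambda>t. \<Sum>p \<in> {p. p permutes {0..<m}}. signof p * (\<Prod>i = 0..<m. A t $$ (i, p i)))"
    using assms(2) by (intro polyfun_sum polyfun_mult polyfun_const polyfun_prod) auto
  then show ?thesis using det_def'[OF assms(1)] by simp
qed

lemma polyfun_adj_mat:
  assumes A: "\<And>t. A t \<in> carrier_mat m m"
    and entries: "\<And>i j. i < m \<Longrightarrow> j < m \<Longrightarrow> polyfun (\<lambda>t. A t $$ (i,j))"
    and ij: "i < m" "j < m"
  shows "polyfun (\<lambda>t. adj_mat (A t) $$ (i,j))"
proof -
  have "adj_mat (A t) $$ (i,j) = (-1)^(j+i) * det (mat_delete (A t) j i)" for t
    using A[of t] ij by (simp add: adj_mat_def cofactor_def)
  moreover have "polyfun (\<lambda>t. (-1)^(j+i) * det (mat_delete (A t) j i))"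
  proof (intro polyfun_mult polyfun_const polyfun_det)
    show "mat_delete (A t) j i \<in> carrier_mat (m - 1) (m - 1)" for t
      using mat_delete_carrier[OF A[of t]] .
    fix a b assume ab: "a < m - 1" "b < m - 1"
    have "mat_delete (A t) j i $$ (a,b) = A t $$ (if a < j then a else Suc a, if b < i then b else Suc b)" for t
      using ab A[of t] by (simp add: mat_delete_def)
    then show "polyfun (\<lambda>t. mat_delete (A t) j i $$ (a,b))" using entries ab by auto
  qed
  ultimately show ?thesis by simp
qed

lemma polyfun_mult_mat:
  assumes A: "\<And>t. A t \<in> carrier_mat m l" and B: "\<And>t. B t \<in> carrier_mat l q"
    and "\<And>i j. i < m \<Longrightarrow> j < l \<Longrightarrow> polyfun (\<lambda>t. A t $$ (i,j))"
    and "\<And>i j. i < l \<Longrightarrow> j < q \<Longrightarrow> polyfun (\<lambda>t. B t $$ (i,j))"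
    and ij: "i < m" "j < q"
  shows "polyfun (\<lambda>t. (A t * B t) $$ (i,j))"
  unfolding index_mult_mat_sum[OF A B ij] using assms(3,4) ij by (intro polyfun_sum polyfun_mult) auto

lemma continuous_on_det_mat:
  "continuous_on UNIV (\<lambda>f :: 'i \<Rightarrow> real. det (mat m m (\<lambda>rc. f (h rc))))"
proof -
  have "p i < m" if "p permutes {0..<m}" "i < m" for p i
    using that permutes_in_image[of p "{0..<m}" i] by auto
  then have "(\<lambda>f :: 'i \<Rightarrow> real. det (mat m m (\<lambda>rc. f (h rc))))
      = (\<lambda>f. \<Sum>p \<in> {p. p permutes {0..<m}}. signof p * (\<Prod>i = 0..<m. f (h (i, p i))))"
    by (auto simp: det_def'[of _ m] intro!: sum.cong prod.cong)
  then show ?thesis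
    by (simp only:) (intro continuous_intros continuous_on_product_coordinates)
qed

lemma mat_mat_coords: "Y \<in> carrier_mat n n \<Longrightarrow> mat n n (mat_coords Y) = Y"
  by (rule eq_matI) (auto simp: mat_coords_def)

lemma continuous_on_lower_left_minor:
  assumes "j \<le> n"
  shows "continuous_on UNIV (\<lambda>f. det (lower_left n j (mat n n f :: real mat)))"
proof -
  have "(\<lambda>f. det (lower_left n j (mat n n f :: real mat)))
      = (\<lambda>f. det (mat j j (\<lambda>rc. f (n - j + fst rc, snd rc))))"
    using assms by (intro ext arg_cong[where f = det] eq_matI) (auto simp: lower_left_def)
  then show ?thesis by (simp only:) (rule continuous_on_det_mat)
qed

lemma open_lower_left_minors_nonzero:
  assumes "k \<le> n"
  shows "open {f. \<forall>j\<in>{1..k}. det (lower_left n j (mat n n f :: real mat)) \<noteq> 0}"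
proof -
  have "{f. \<forall>j\<in>{1..k}. det (lower_left n j (mat n n f :: real mat)) \<noteq> 0}
      = (\<Inter>j\<in>{1..k}. {f. det (lower_left n j (mat n n f :: real mat)) \<noteq> 0})"
    by auto
  also have "open \<dots>"
    using assms by (intro open_INT ballI open_Collect_neq continuous_on_lower_left_minor continuous_on_const) auto
  finally show ?thesis .
qed

section \<open>The nilpotent element \<open>X\<^sub>k\<^sub>,\<^sub>\<epsilon>\<close> and its Borel orbit\<close>

lemma foldr_plus_mat:
  assumes f: "\<And>i. f i \<in> carrier_mat n n" and Z: "Z \<in> carrier_mat n n"
  shows "foldr (+) (map f xs) Z \<in> carrier_mat n n"
    "a < n \<Longrightarrow> b < n \<Longrightarrow> foldr (+) (map f xs) Z $$ (a,b) = (\<Sum>i\<leftarrow>xs. f i $$ (a,b)) + Z $$ (a,b)"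
proof -
  have "foldr (+) (map f xs) Z \<in> carrier_mat n n \<and>
    (\<forall>a<n. \<forall>b<n. foldr (+) (map f xs) Z $$ (a,b) = (\<Sum>i\<leftarrow>xs. f i $$ (a,b)) + Z $$ (a,b))"
    by (induction xs) (use f Z in \<open>auto simp: add.assoc\<close>)
  then show "foldr (+) (map f xs) Z \<in> carrier_mat n n"
    "a < n \<Longrightarrow> b < n \<Longrightarrow> foldr (+) (map f xs) Z $$ (a,b) = (\<Sum>i\<leftarrow>xs. f i $$ (a,b)) + Z $$ (a,b)"
    by auto
qed

locale Xke_orbit =
  fixes n k :: nat and eps :: real
  assumes two_le_k: "2 \<le> k" and double_k_le_n: "2 * k \<le> n" and eps: "eps \<in> {1, -1}"
begin

abbreviation X :: "real mat" where "X \<equiv> Xke n k eps"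

text \<open>In 0-based indices, \<open>X\<close> maps the basis vector \<open>e\<^sub>i\<close> to \<open>coef i \<cdot> e\<^sub>n\<^sub>-\<^sub>1\<^sub>-\<^sub>i\<close> for \<open>i < k\<close>
  and kills \<open>e\<^sub>i\<close> for \<open>i \<ge> k\<close>.\<close>

definition coef :: "nat \<Rightarrow> real" where
  "coef i = (if i = k - 1 then eps else 1)"

lemma coef_nonzero: "coef i \<noteq> 0"
  using eps by (auto simp: coef_def)

lemma X_carrier: "X \<in> carrier_mat n n"
  unfolding Xke_def by (rule foldr_plus_mat(1)) (auto simp: Emat_def)

lemma X_index:
  assumes "a < n" "b < n"
  shows "X $$ (a,b) = (if b < k \<and> a = n - 1 - b then coef b else 0)"
proof -
  let ?f = "\<lambda>i. Emat n (n + 1 - i) i"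
  have "X $$ (a,b) = (\<Sum>i\<leftarrow>[1..<k]. ?f i $$ (a,b)) + (eps \<cdot>\<^sub>m Emat n (n + 1 - k) k) $$ (a,b)"
    unfolding Xke_def by (rule foldr_plus_mat(2)) (use assms in \<open>auto simp: Emat_def\<close>)
  also have "(eps \<cdot>\<^sub>m Emat n (n + 1 - k) k) $$ (a,b) = eps * Emat n (n + 1 - k) k $$ (a,b)"
    using assms by (simp add: Emat_def)
  also have "(\<Sum>i\<leftarrow>[1..<k]. ?f i $$ (a,b)) = (\<Sum>i\<in>{1..<k}. ?f i $$ (a,b))"
    by (simp add: interv_sum_list_conv_sum_set_nat)
  also have "(\<Sum>i\<in>{1..<k}. ?f i $$ (a,b)) = (\<Sum>i\<in>{1..<k}. if i = b + 1 then (if a = n - 1 - b then 1 else 0) else 0)"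
    using assms double_k_le_n by (intro sum.cong) (auto simp: Emat_def)
  also have "\<dots> = (if b + 1 < k \<and> a = n - 1 - b then 1 else 0)"
    by (subst sum.delta) auto
  finally show ?thesis
    using assms two_le_k double_k_le_n by (cases "b + 1 = k") (auto simp: Emat_def coef_def)
qed

lemma mult_X_index:
  assumes A: "A \<in> carrier_mat m n" and a: "a < m" and j: "j < n"
  shows "(A * X) $$ (a,j) = (if j < k then A $$ (a, n - 1 - j) * coef j else 0)"
proof -
  have "(A * X) $$ (a,j) = (\<Sum>q<n. A $$ (a,q) * X $$ (q,j))"
    by (rule index_mult_mat_sum[OF A X_carrier a j])
  also have "\<dots> = (\<Sum>q<n. if q = n - 1 - j then (if j < k then A $$ (a,q) * coef j else 0) else 0)"
    using X_index j by (intro sum.cong) auto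
  also have "\<dots> = (if j < k then A $$ (a, n - 1 - j) * coef j else 0)"
    using j by simp
  finally show ?thesis .
qed

lemma X_mult_index:
  assumes A: "A \<in> carrier_mat n m" and a: "a < n" and j: "j < m"
  shows "(X * A) $$ (a,j) = (if n - k \<le> a then coef (n - 1 - a) * A $$ (n - 1 - a, j) else 0)"
proof -
  have "(X * A) $$ (a,j) = (\<Sum>q<n. X $$ (a,q) * A $$ (q,j))"
    by (rule index_mult_mat_sum[OF X_carrier A a j])
  also have "\<dots> = (\<Sum>q<n. if q = n - 1 - a then (if n - k \<le> a then coef q * A $$ (q,j) else 0) else 0)"
    using X_index a by (intro sum.cong) auto
  also have "\<dots> = (if n - k \<le> a then coef (n - 1 - a) * A $$ (n - 1 - a, j) else 0)"
    using a by simp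
  finally show ?thesis .
qed

lemma X_squared: "X * X = 0\<^sub>m n n"
proof (rule eq_matI)
  fix a j assume "a < dim_row (0\<^sub>m n n :: real mat)" "j < dim_col (0\<^sub>m n n :: real mat)"
  then have aj: "a < n" "j < n" by auto
  then have "(X * X) $$ (a,j) = (if j < k then X $$ (a, n - 1 - j) * coef j else 0)"
    by (intro mult_X_index[OF X_carrier])
  then show "(X * X) $$ (a,j) = 0\<^sub>m n n $$ (a,j)"
    using aj double_k_le_n by (auto simp: X_index)
qed (use X_carrier in auto)

lemma X_in_sl: "X \<in> sl n"
  using X_carrier double_k_le_n by (auto simp: sl_def X_index intro!: sum.neutral)

lemma conj_X_index:
  assumes g: "g \<in> carrier_mat m n" and h: "h \<in> carrier_mat n q" and a: "a < m" and b: "b < q"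
  shows "(g * X * h) $$ (a,b) = (\<Sum>i<k. g $$ (a, n - 1 - i) * coef i * h $$ (i,b))"
proof -
  have gX: "g * X \<in> carrier_mat m n" using g X_carrier by simp
  have "(g * X * h) $$ (a,b) = (\<Sum>p<n. (g * X) $$ (a,p) * h $$ (p,b))"
    by (rule index_mult_mat_sum[OF gX h a b])
  also have "\<dots> = (\<Sum>p<n. if p < k then g $$ (a, n - 1 - p) * coef p * h $$ (p,b) else 0)"
    using mult_X_index[OF g a] by (intro sum.cong) auto
  also have "\<dots> = (\<Sum>i<k. g $$ (a, n - 1 - i) * coef i * h $$ (i,b))"
    using double_k_le_n by (subst sum.mono_neutral_right[of "{..<n}" "{..<k}"]) auto
  finally show ?thesis .
qed

lemma Ad_X_squared:
  assumes g: "g \<in> carrier_mat n n" "det g \<noteq> 0"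
  shows "Ad g X * Ad g X = 0\<^sub>m n n"
proof -
  note gi = mat_inv_carrier[OF g]
  have "Ad g X * Ad g X = g * X * (mat_inv g * g) * X * mat_inv g"
    using g gi X_carrier unfolding Ad_def by (simp add: assoc_mult_mat[of _ n n _ n _ n])
  also have "\<dots> = g * (X * X) * mat_inv g"
    using g gi X_carrier mat_inv_left[OF g] by (simp add: assoc_mult_mat[of _ n n _ n _ n])
  finally show ?thesis using g gi by (simp add: X_squared)
qed

lemma lower_left_X_minor:
  assumes j: "j \<le> k"
  shows "det (lower_left n j X) \<noteq> 0"
proof
  let ?M = "lower_left n j X"
  assume "det ?M = 0"
  then obtain v where v: "v \<in> carrier_vec j" "v \<noteq> 0\<^sub>v j" "?M *\<^sub>v v = 0\<^sub>v j"
    using det_0_iff_vec_prod_zero_field[OF lower_left_carrier] by blast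
  have "v $ l = 0" if l: "l < j" for l
  proof -
    have "?M $$ (j - 1 - l, c) = (if c = l then coef l else 0)" if "c < j" for c
      using that l j double_k_le_n by (auto simp: lower_left_def X_index)
    then have "(\<Sum>c<j. ?M $$ (j - 1 - l, c) * v $ c) = (\<Sum>c<j. if c = l then coef l * v $ l else 0)"
      by (intro sum.cong) auto
    then have "(?M *\<^sub>v v) $ (j - 1 - l) = coef l * v $ l"
      using l by (simp add: index_mult_mat_vec_sum[OF lower_left_carrier v(1)])
    then show ?thesis using v(3) l coef_nonzero by simp
  qed
  then have "v = 0\<^sub>v j" using v(1) by (intro eq_vecI) auto
  then show False using v(2) by simp
qed

end

locale Xke_adapted = Xke_orbit +
  fixes Y :: "real mat" and v :: "nat \<Rightarrow> nat \<Rightarrow> real"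
  assumes Y_carrier: "Y \<in> carrier_mat n n" and Y_squared: "Y * Y = 0\<^sub>m n n"
    and v_unit: "j < n - k \<Longrightarrow> v j j = 1"
    and v_upper: "j < n - k \<Longrightarrow> j < r \<Longrightarrow> v j r = 0"
    and Yv_lower: "j < k \<Longrightarrow> n - 1 - j < r \<Longrightarrow> r < n \<Longrightarrow> (\<Sum>l<n. Y $$ (r,l) * v j l) = 0"
    and Yv_pivot: "j < k \<Longrightarrow> (\<Sum>l<n. Y $$ (n - 1 - j, l) * v j l) \<noteq> 0"
    and Yv_kernel: "k \<le> j \<Longrightarrow> j < n - k \<Longrightarrow> a < n \<Longrightarrow> (\<Sum>l<n. Y $$ (a,l) * v j l) = 0"
begin

definition V :: "real mat" where
  "V = mat n n (\<lambda>(l,j). v j l)"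

text \<open>The columns \<open>j < n - k\<close> are the vectors \<open>v j\<close>, and column \<open>n - 1 - i\<close> for \<open>i < k\<close> is
  \<open>Y (v i) / coef i\<close>; this mirrors \<open>X e\<^sub>i = coef i \<cdot> e\<^sub>n\<^sub>-\<^sub>1\<^sub>-\<^sub>i\<close>.\<close>

definition adapted_basis :: "real mat" where
  "adapted_basis = mat n n (\<lambda>(r,j). if j < n - k then v j r
     else (Y * V) $$ (r, n - 1 - j) / coef (n - 1 - j))"

lemma adapted_basis_carrier: "adapted_basis \<in> carrier_mat n n"
  by (simp add: adapted_basis_def)

lemma Y_V_index: "r < n \<Longrightarrow> j < n \<Longrightarrow> (Y * V) $$ (r,j) = (\<Sum>l<n. Y $$ (r,l) * v j l)"
  using index_mult_mat_sum[OF Y_carrier, of V n] by (simp add: V_def)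

lemma adapted_basis_upper_triangular: "upper_triangular adapted_basis"
proof (rule upper_triangularI)
  fix r j assume rj: "j < r" "r < dim_row adapted_basis"
  then show "adapted_basis $$ (r,j) = 0"
    using v_upper Yv_lower[of "n - 1 - j" r] by (auto simp: adapted_basis_def Y_V_index)
qed

lemma adapted_basis_det_nonzero: "det adapted_basis \<noteq> 0"
proof -
  have "adapted_basis $$ (j,j) \<noteq> 0" if "j < n" for j
  proof (cases "j < n - k")
    case False
    then have "n - 1 - (n - 1 - j) = j" "n - 1 - j < k" using that by auto
    then show ?thesis
      using that False Yv_pivot[of "n - 1 - j"] coef_nonzero by (simp add: adapted_basis_def Y_V_index)
  qed (use that v_unit in \<open>simp add: adapted_basis_def\<close>)
  then show ?thesis
    by (simp add: det_upper_triangular_diag[OF adapted_basis_upper_triangular adapted_basis_carrier])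
qed

lemma adapted_basis_intertwines: "Y * adapted_basis = adapted_basis * X"
proof (rule eq_matI)
  fix a j assume "a < dim_row (adapted_basis * X)" "j < dim_col (adapted_basis * X)"
  then have aj: "a < n" "j < n" using adapted_basis_carrier X_carrier by auto
  have V: "V \<in> carrier_mat n n" by (simp add: V_def)
  have Yb: "(Y * adapted_basis) $$ (a,j) = (\<Sum>l<n. Y $$ (a,l) * adapted_basis $$ (l,j))"
    by (rule index_mult_mat_sum[OF Y_carrier adapted_basis_carrier aj])
  have bX: "(adapted_basis * X) $$ (a,j) = (if j < k then (Y * V) $$ (a,j) else 0)"
    using mult_X_index[OF adapted_basis_carrier aj] aj double_k_le_n coef_nonzero
    by (auto simp: adapted_basis_def)
  show "(Y * adapted_basis) $$ (a,j) = (adapted_basis * X) $$ (a,j)"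
  proof (cases "j < n - k")
    case True
    then have "(Y * adapted_basis) $$ (a,j) = (Y * V) $$ (a,j)"
      using aj unfolding Yb by (simp add: Y_V_index adapted_basis_def)
    then show ?thesis using bX Yv_kernel[OF _ True aj(1)] aj by (simp add: Y_V_index)
  next
    case False
    let ?i = "n - 1 - j"
    have "(Y * adapted_basis) $$ (a,j) = (\<Sum>l<n. Y $$ (a,l) * (Y * V) $$ (l, ?i)) / coef ?i"
      using False aj unfolding Yb by (simp add: adapted_basis_def sum_divide_distrib)
    also have "(\<Sum>l<n. Y $$ (a,l) * (Y * V) $$ (l, ?i)) = (Y * (Y * V)) $$ (a, ?i)"
      by (rule index_mult_mat_sum[symmetric, OF Y_carrier, of _ n]) (use V aj Y_carrier in auto)
    also have "Y * (Y * V) = 0\<^sub>m n n"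
      using V Y_carrier by (simp flip: assoc_mult_mat[OF Y_carrier Y_carrier V] add: Y_squared)
    finally show ?thesis using bX False aj double_k_le_n by simp
  qed
qed (use Y_carrier adapted_basis_carrier X_carrier in auto)

end

context Xke_orbit
begin

text \<open>Since \<open>g X h = \<Sum>\<^sub>i\<^sub><\<^sub>k coef i \<cdot> (column n - 1 - i of g) (row i of h)\<close>, every vector killed
  by the first \<open>k\<close> rows of \<open>h\<close> is killed by \<open>g X h\<close>; the lower left minor of order \<open>k\<close>
  factors through the upper left \<open>k \<times> k\<close> block of \<open>h\<close>, which is therefore invertible.\<close>

lemma conj_X_kernel_vector:
  assumes g: "g \<in> carrier_mat n n" and h: "h \<in> carrier_mat n n"
    and D: "det (lower_left n k (g * X * h)) \<noteq> 0" and j: "k \<le> j" "j < n"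
  shows "\<exists>w. w j = 1 \<and> (\<forall>r. r \<noteq> j \<longrightarrow> k \<le> r \<longrightarrow> w r = 0)
    \<and> (\<forall>a<n. (\<Sum>l<n. (g * X * h) $$ (a,l) * w l) = 0)"
proof -
  define W where "W = mat k k (\<lambda>(i,l). h $$ (i,l))"
  define G where "G = mat k k (\<lambda>(r,i). g $$ (n - k + r, n - 1 - i) * coef i)"
  have W: "W \<in> carrier_mat k k" and G: "G \<in> carrier_mat k k" by (auto simp: W_def G_def)
  have "lower_left n k (g * X * h) = G * W"
  proof (rule eq_matI)
    fix r l assume "r < dim_row (G * W)" "l < dim_col (G * W)"
    then have rl: "r < k" "l < k" using G W by auto
    have "(G * W) $$ (r,l) = (\<Sum>i<k. g $$ (n - k + r, n - 1 - i) * coef i * h $$ (i,l))"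
      unfolding index_mult_mat_sum[OF G W rl] using rl by (intro sum.cong) (auto simp: G_def W_def)
    also have "\<dots> = (g * X * h) $$ (n - k + r, l)"
      using rl double_k_le_n by (intro conj_X_index[symmetric, OF g h]) auto
    finally show "lower_left n k (g * X * h) $$ (r,l) = (G * W) $$ (r,l)"
      using rl by (simp add: lower_left_def)
  qed (use G W in \<open>auto simp: lower_left_def\<close>)
  then have "det (G * W) \<noteq> 0" using D by simp
  then have detW: "det W \<noteq> 0" unfolding det_mult[OF G W] by simp
  obtain x where x: "\<And>i. i < k \<Longrightarrow> (\<Sum>l<k. W $$ (i,l) * x l) = - h $$ (i,j)"
    using linear_system_solvable[OF W detW, of "\<lambda>i. - h $$ (i,j)"] by blast
  define w where "w l = (if l < k then x l else if l = j then 1 else 0)" for l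
  have hw: "(\<Sum>l<n. h $$ (i,l) * w l) = 0" if i: "i < k" for i
    using x[OF i] i unfolding w_def sum_prefix_plus_unit[OF j] by (simp add: W_def)
  have "(\<Sum>l<n. (g * X * h) $$ (a,l) * w l) = 0" if a: "a < n" for a
  proof -
    have "(\<Sum>l<n. (g * X * h) $$ (a,l) * w l)
        = (\<Sum>l<n. \<Sum>i<k. g $$ (a, n - 1 - i) * coef i * (h $$ (i,l) * w l))"
      using a by (simp add: conj_X_index[OF g h] sum_distrib_right mult.assoc)
    also have "\<dots> = (\<Sum>i<k. g $$ (a, n - 1 - i) * coef i * (\<Sum>l<n. h $$ (i,l) * w l))"
      by (subst sum.swap) (simp add: sum_distrib_left)
    finally show ?thesis using hw by simp
  qed
  then show ?thesis using j by (intro exI[of _ w]) (auto simp: w_def)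
qed

lemma intertwiner_exists:
  assumes g: "g \<in> carrier_mat n n" "det g \<noteq> 0"
    and D: "\<And>j. j \<in> {1..k} \<Longrightarrow> det (lower_left n j (Ad g X)) \<noteq> 0"
  shows "\<exists>b. b \<in> carrier_mat n n \<and> upper_triangular b \<and> det b \<noteq> 0 \<and> Ad g X * b = b * X"
proof -
  let ?Y = "Ad g X"
  have Y: "?Y \<in> carrier_mat n n" using Ad_carrier[OF g X_carrier] .
  have D': "det (lower_left n j ?Y) \<noteq> 0" if "j \<le> k" for j
    using D[of j] that by (cases "j = 0") (auto simp: lower_left_def)
  have "\<forall>j\<in>{..<k}. \<exists>w. w j = 1 \<and> (\<forall>r>j. w r = 0)
    \<and> (\<forall>r. n - 1 - j < r \<longrightarrow> r < n \<longrightarrow> (\<Sum>l<n. ?Y $$ (r,l) * w l) = 0)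
    \<and> (\<Sum>l<n. ?Y $$ (n - 1 - j, l) * w l) \<noteq> 0"
    using vector_from_lower_left_minors[OF Y _ D' D'] double_k_le_n by simp
  then obtain \<beta> where \<beta>: "\<forall>j\<in>{..<k}. \<beta> j j = 1 \<and> (\<forall>r>j. \<beta> j r = 0)
    \<and> (\<forall>r. n - 1 - j < r \<longrightarrow> r < n \<longrightarrow> (\<Sum>l<n. ?Y $$ (r,l) * \<beta> j l) = 0)
    \<and> (\<Sum>l<n. ?Y $$ (n - 1 - j, l) * \<beta> j l) \<noteq> 0"
    by (auto dest!: bchoice)
  have "\<forall>j\<in>{k..<n}. \<exists>w. w j = 1 \<and> (\<forall>r. r \<noteq> j \<longrightarrow> k \<le> r \<longrightarrow> w r = 0)
    \<and> (\<forall>a<n. (\<Sum>l<n. ?Y $$ (a,l) * w l) = 0)"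
    using conj_X_kernel_vector[OF g(1) mat_inv_carrier[OF g]] D'[of k] by (simp add: Ad_def)
  then obtain \<gamma> where \<gamma>: "\<forall>j\<in>{k..<n}. \<gamma> j j = 1 \<and> (\<forall>r. r \<noteq> j \<longrightarrow> k \<le> r \<longrightarrow> \<gamma> j r = 0)
    \<and> (\<forall>a<n. (\<Sum>l<n. ?Y $$ (a,l) * \<gamma> j l) = 0)"
    by (auto dest!: bchoice)
  interpret Xke_adapted n k eps ?Y "\<lambda>j. if j < k then \<beta> j else \<gamma> j"
    using Y Ad_X_squared[OF g] \<beta> \<gamma> by unfold_locales auto
  show ?thesis
    using adapted_basis_carrier adapted_basis_upper_triangular adapted_basis_det_nonzero
      adapted_basis_intertwines by blast
qed

lemma sign_flip_commutes_X:
  assumes "2 * k < n"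
  shows "\<exists>d. d \<in> carrier_mat n n \<and> upper_triangular d \<and> det d = -1 \<and> d * X = X * d"
proof -
  define d :: "real mat" where "d = mat n n (\<lambda>(i,j). if i = j then if i = k then -1 else 1 else 0)"
  have dc: "d \<in> carrier_mat n n" and ut: "upper_triangular d"
    by (auto simp: d_def upper_triangular_def)
  have "det d = (\<Prod>i<n. d $$ (i,i))" by (rule det_upper_triangular_diag[OF ut dc])
  also have "\<dots> = (\<Prod>i<n. if i = k then -1 else 1)" by (simp add: d_def)
  also have "\<dots> = -1" using assms by (subst prod.delta) auto
  finally have det: "det d = -1" .
  have "d * X = X"
  proof (rule eq_matI)
    fix a j assume "a < dim_row X" "j < dim_col X"
    then have aj: "a < n" "j < n" using X_carrier by auto
    have "(d * X) $$ (a,j) = (if j < k then d $$ (a, n - 1 - j) * coef j else 0)"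
      by (rule mult_X_index[OF dc aj])
    then show "(d * X) $$ (a,j) = X $$ (a,j)" using aj assms by (auto simp: d_def X_index)
  qed (use dc X_carrier in auto)
  moreover have "X * d = X"
  proof (rule eq_matI)
    fix a j assume "a < dim_row X" "j < dim_col X"
    then have aj: "a < n" "j < n" using X_carrier by auto
    have "(X * d) $$ (a,j) = (if n - k \<le> a then coef (n - 1 - a) * d $$ (n - 1 - a, j) else 0)"
      by (rule X_mult_index[OF dc aj])
    then show "(X * d) $$ (a,j) = X $$ (a,j)" using aj assms by (auto simp: d_def X_index)
  qed (use dc X_carrier in auto)
  ultimately show ?thesis using dc ut det by (intro exI[of _ d]) simp
qed

lemma X_four_block:
  assumes "n = 2 * k"
  shows "X = four_block_mat (0\<^sub>m k k) (0\<^sub>m k k) (lower_left n k X) (0\<^sub>m k k)"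
proof -
  have "n - k = k" "k + k = n" using assms by auto
  then show ?thesis using X_carrier by (intro eq_matI) (auto simp: index_mat_four_block X_index lower_left_def)
qed

lemma det_nonneg_if_commutes_X:
  assumes n: "n = 2 * k" and s: "s \<in> carrier_mat n n" and comm: "s * X = X * s"
  shows "det s \<ge> 0"
proof -
  define C where "C = lower_left n k X"
  have C: "C \<in> carrier_mat k k" and detC: "det C \<noteq> 0" using lower_left_X_minor by (auto simp: C_def)
  have X_blocks: "X = four_block_mat (0\<^sub>m k k) (0\<^sub>m k k) C (0\<^sub>m k k)"
    unfolding C_def by (rule X_four_block[OF n])
  obtain P Q R T where split: "split_block s k k = (P, Q, R, T)" by (metis prod_cases4)
  note blocks = split_block[OF split, of k k]
  have PQRT: "P \<in> carrier_mat k k" "Q \<in> carrier_mat k k" "R \<in> carrier_mat k k" "T \<in> carrier_mat k k"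
    and s_blocks: "s = four_block_mat P Q R T" using blocks s n by auto
  have "s * X = four_block_mat (Q * C) (0\<^sub>m k k) (T * C) (0\<^sub>m k k)"
    unfolding s_blocks X_blocks using PQRT C by (subst mult_four_block_mat[OF PQRT, of _ k _ k]) auto
  moreover have "X * s = four_block_mat (0\<^sub>m k k) (0\<^sub>m k k) (C * P) (C * Q)"
    unfolding s_blocks X_blocks using PQRT C by (subst mult_four_block_mat[of _ k k _ k]) auto
  ultimately have blocks_eq: "four_block_mat (Q * C) (0\<^sub>m k k) (T * C) (0\<^sub>m k k)
      = four_block_mat (0\<^sub>m k k) (0\<^sub>m k k) (C * P) (C * Q)"
    using comm by simp
  have "Q * C \<in> carrier_mat k k" "T * C \<in> carrier_mat k k" "C * P \<in> carrier_mat k k" "C * Q \<in> carrier_mat k k"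
    using PQRT C by auto
  note eqD = four_block_mat_eqD[OF this(1) zero_carrier_mat this(2) zero_carrier_mat
      zero_carrier_mat zero_carrier_mat this(3,4) blocks_eq]
  have QC: "Q * C = 0\<^sub>m k k" and TC: "T * C = C * P" using eqD(1,3) .
  have "Q = Q * (C * mat_inv C)" using mat_inv_right[OF C detC] PQRT by simp
  also have "\<dots> = 0\<^sub>m k k"
    using QC PQRT C mat_inv_carrier[OF C detC] by (simp flip: assoc_mult_mat[of Q k k C k])
  finally have Q0: "Q = 0\<^sub>m k k" .
  have "det T * det C = det C * det P" using TC det_mult PQRT C by metis
  then have "det T = det P" using detC by simp
  moreover have "det s = det P * det T"
    unfolding s_blocks by (rule det_four_block_mat_upper_right_zero[OF PQRT(1) Q0 PQRT(3,4)])
  ultimately show ?thesis by simp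
qed

lemma Ad_mem_Borel_orbit:
  assumes g: "g \<in> carrier_mat n n" "det g > 0"
    and D: "\<And>j. j \<in> {1..k} \<Longrightarrow> det (lower_left n j (Ad g X)) \<noteq> 0"
  shows "Ad g X \<in> orbit (Borel n) X"
proof -
  have n: "0 < n" using two_le_k double_k_le_n by simp
  have g': "det g \<noteq> 0" using g by simp
  let ?Y = "Ad g X"
  have Y: "?Y \<in> carrier_mat n n" using Ad_carrier[OF g(1) g' X_carrier] .
  obtain b where b: "b \<in> carrier_mat n n" "upper_triangular b" "det b \<noteq> 0" "?Y * b = b * X"
    using intertwiner_exists[OF g(1) g' D] by blast
  consider "det b > 0" | "det b < 0" "2 * k < n" | "det b < 0" "n = 2 * k"
    using b(3) double_k_le_n by fastforce
  then show ?thesis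
  proof cases
    case 1
    then show ?thesis using Borel_orbit_if_intertwines[OF b(1,2) _ n X_carrier Y b(4)] by blast
  next
    case 2
    then obtain d where d: "d \<in> carrier_mat n n" "upper_triangular d" "det d = -1" "d * X = X * d"
      using sign_flip_commutes_X by blast
    have "?Y * (b * d) = (?Y * b) * d" using b(1) d(1) Y by simp
    also have "\<dots> = (b * X) * d" by (simp only: b(4))
    also have "\<dots> = b * (d * X)" using b d X_carrier by (simp add: d(4)[symmetric])
    also have "\<dots> = (b * d) * X" using b d X_carrier by simp
    moreover have "det (b * d) > 0" using det_mult[OF b(1) d(1)] d(3) 2 by simp
    ultimately show ?thesis
      using Borel_orbit_if_intertwines[OF _ upper_triangular_mult[OF b(1,2) d(1,2)] _ n X_carrier Y]
        b(1) d(1) by simp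
  next
    case 3
    let ?s = "mat_inv g * b"
    have s: "?s \<in> carrier_mat n n" using mat_inv_carrier[OF g(1) g'] b(1) by simp
    have "?s * X = X * ?s" using commutes_if_Ad_intertwines[OF g(1) g' b(1) X_carrier b(4)] by simp
    then have "det ?s \<ge> 0" using det_nonneg_if_commutes_X[OF 3(2) s] by simp
    moreover have "det ?s = det b / det g"
      using det_mult[OF mat_inv_carrier[OF g(1) g'] b(1)] det_mat_inv[OF g(1) g'] by simp
    ultimately show ?thesis using divide_neg_pos[OF 3(1) g(2)] by linarith
  qed
qed

end

section \<open>Density and uniqueness\<close>

lemma polyfun_conj_adj_mat:
  assumes G: "\<And>t. G t \<in> carrier_mat n n"
    and entries: "\<And>a b. a < n \<Longrightarrow> b < n \<Longrightarrow> polyfun (\<lambda>t. G t $$ (a,b))"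
    and M: "M \<in> carrier_mat n n" and ab: "a < n" "b < n"
  shows "polyfun (\<lambda>t. (G t * M * adj_mat (G t)) $$ (a,b))"
proof (rule polyfun_mult_mat[OF _ _ _ _ ab])
  show "G t * M \<in> carrier_mat n n" "adj_mat (G t) \<in> carrier_mat n n" for t
    using mult_carrier_mat[OF G M] adj_mat(1)[OF G] by auto
  show "polyfun (\<lambda>t. (G t * M) $$ (i,j))" if "i < n" "j < n" for i j
    using polyfun_mult_mat[OF G, of "\<lambda>_. M"] M entries that by auto
  show "polyfun (\<lambda>t. adj_mat (G t) $$ (i,j))" if "i < n" "j < n" for i j
    using polyfun_adj_mat[OF G entries that] .
qed

lemma tendsto_mat_coords_Ad:
  assumes G: "\<And>t. G t \<in> carrier_mat n n"
    and entries: "\<And>a b. a < n \<Longrightarrow> b < n \<Longrightarrow> polyfun (\<lambda>t. G t $$ (a,b))"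
    and d0: "det (G t0) \<noteq> 0" and M: "M \<in> carrier_mat n n"
  shows "((\<lambda>t. mat_coords (Ad (G t) M)) \<longlongrightarrow> mat_coords (Ad (G t0) M)) (at t0)"
proof -
  let ?S = "{t. det (G t) \<noteq> 0}"
  have d: "continuous_on UNIV (\<lambda>t. det (G t))"
    by (rule continuous_on_polyfun[OF polyfun_det[OF G entries]])
  have S: "open ?S" by (rule open_Collect_neq[OF d continuous_on_const])
  have "continuous_on ?S (\<lambda>t. mat_coords (Ad (G t) M))"
  proof (rule continuous_on_coordinatewise_then_product)
    fix ab :: "nat \<times> nat"
    obtain a b where ab: "ab = (a,b)" by fastforce
    have Ad: "Ad (G t) M = (1 / det (G t)) \<cdot>\<^sub>m (G t * M * adj_mat (G t))" if "t \<in> ?S" for t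
      using that G[of t] M adj_mat(1)[OF G[of t]] by (simp add: Ad_def mat_inv_adj mult_smult_distrib[of _ n n _ n])
    show "continuous_on ?S (\<lambda>t. mat_coords (Ad (G t) M) ab)"
    proof (cases "a < n \<and> b < n")
      case True
      have "continuous_on ?S (\<lambda>t. (G t * M * adj_mat (G t)) $$ (a,b))"
        using True by (intro continuous_on_polyfun polyfun_conj_adj_mat[OF G entries M]) auto
      moreover have "continuous_on ?S (\<lambda>t. det (G t))" using continuous_on_subset[OF d] by blast
      ultimately have "continuous_on ?S (\<lambda>t. (G t * M * adj_mat (G t)) $$ (a,b) / det (G t))"
        by (auto intro: continuous_on_divide)
      then show ?thesis
        by (rule continuous_on_eq)
           (use True in \<open>auto simp: mat_coords_def ab Ad carrier_matD[OF G] carrier_matD[OF adj_mat(1)[OF G]]\<close>)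
    next
      case False
      show ?thesis
        by (rule continuous_on_eq[OF continuous_on_const[of _ 0]])
           (use False in \<open>auto simp: mat_coords_def ab Ad carrier_matD[OF G] carrier_matD[OF adj_mat(1)[OF G]]\<close>)
    qed
  qed
  then have "isCont (\<lambda>t. mat_coords (Ad (G t) M)) t0"
    using S d0 continuous_on_eq_continuous_at by blast
  then show ?thesis by (rule isContD)
qed

lemma adj_mat_one: "adj_mat (1\<^sub>m n) = (1\<^sub>m n :: 'a :: comm_ring_1 mat)"
  using adj_mat(1,2)[of "1\<^sub>m n :: 'a mat" n] by simp

lemma eventually_det_pos:
  assumes G: "\<And>t. G t \<in> carrier_mat n n"
    and entries: "\<And>a b. a < n \<Longrightarrow> b < n \<Longrightarrow> polyfun (\<lambda>t. G t $$ (a,b))"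
    and d0: "det (G t0) > 0"
  shows "eventually (\<lambda>t. det (G t) > 0) (at t0)"
proof -
  have "isCont (\<lambda>t. det (G t)) t0"
    using continuous_on_eq_continuous_at[OF open_UNIV] continuous_on_polyfun[OF polyfun_det[OF G entries]]
    by blast
  then show ?thesis using d0 by (simp add: isCont_def order_tendstoD(1))
qed

definition segment_to_one :: "nat \<Rightarrow> real mat \<Rightarrow> real \<Rightarrow> real mat" where
  "segment_to_one n g t = g + t \<cdot>\<^sub>m (1\<^sub>m n - g)"

lemma segment_to_one_carrier: "g \<in> carrier_mat n n \<Longrightarrow> segment_to_one n g t \<in> carrier_mat n n"
  by (simp add: segment_to_one_def minus_carrier_mat)

lemma segment_to_one_0: "g \<in> carrier_mat n n \<Longrightarrow> segment_to_one n g 0 = g"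
  by (intro eq_matI) (auto simp: segment_to_one_def minus_carrier_mat)

lemma segment_to_one_1: "g \<in> carrier_mat n n \<Longrightarrow> segment_to_one n g 1 = 1\<^sub>m n"
  by (intro eq_matI) (auto simp: segment_to_one_def)

lemma polyfun_segment_to_one:
  "g \<in> carrier_mat n n \<Longrightarrow> a < n \<Longrightarrow> b < n \<Longrightarrow> polyfun (\<lambda>t. segment_to_one n g t $$ (a,b))"
  by (simp add: segment_to_one_def polyfun_add polyfun_mult)

context Xke_orbit
begin

lemma eventually_Ad_segment_mem_Borel_orbit:
  assumes g: "g \<in> carrier_mat n n" "det g > 0"
  shows "eventually (\<lambda>t. Ad (segment_to_one n g t) X \<in> orbit (Borel n) X) (at 0)"
proof -
  let ?G = "segment_to_one n g"
  note G = segment_to_one_carrier[OF g(1)] and entries = polyfun_segment_to_one[OF g(1)]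
  define N where "N t = ?G t * X * adj_mat (?G t)" for t
  have N: "N t \<in> carrier_mat n n" for t
    using mult_carrier_mat[OF mult_carrier_mat[OF G X_carrier] adj_mat(1)[OF G]] by (simp add: N_def)
  define F where "F t = (\<Prod>j\<in>{1..k}. det (lower_left n j (N t)))" for t
  have "polyfun F"
    unfolding F_def
  proof (intro polyfun_prod polyfun_det)
    fix j r c assume "j \<in> {1..k}" "r < j" "c < j"
    then show "polyfun (\<lambda>t. lower_left n j (N t) $$ (r,c))"
      using polyfun_conj_adj_mat[OF G entries X_carrier, of "n - j + r" c] double_k_le_n
      by (simp add: lower_left_def N_def)
  qed simp
  moreover have "F 1 \<noteq> 0"
    using lower_left_X_minor X_carrier by (simp add: F_def N_def segment_to_one_1[OF g(1)] adj_mat_one)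
  ultimately have "eventually (\<lambda>t. F t \<noteq> 0) (at 0)" by (rule polyfun_eventually_nonzero)
  moreover have "eventually (\<lambda>t. det (?G t) > 0) (at 0)"
    using eventually_det_pos[OF G entries] g by (simp add: segment_to_one_0)
  ultimately show ?thesis
  proof eventually_elim
    case (elim t)
    have "Ad (?G t) X = (1 / det (?G t)) \<cdot>\<^sub>m N t"
      using elim(2) mat_inv_adj[OF G, of t]
        mult_smult_distrib[OF mult_carrier_mat[OF G X_carrier] adj_mat(1)[OF G]]
      by (simp add: Ad_def N_def)
    then have "det (lower_left n j (Ad (?G t) X)) \<noteq> 0" if "j \<in> {1..k}" for j
      using that elim double_k_le_n N
      by (simp add: lower_left_smult det_smult F_def prod_zero_iff)
    then show ?case using Ad_mem_Borel_orbit[OF G] elim(2) by simp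
  qed
qed

lemma Ad_mem_closure_Borel_orbit:
  assumes g: "g \<in> carrier_mat n n" "det g > 0"
  shows "mat_coords (Ad g X) \<in> closure (mat_coords ` orbit (Borel n) X)"
proof (rule Lim_in_closed_set[OF closed_closure])
  let ?G = "segment_to_one n g"
  show "((\<lambda>t. mat_coords (Ad (?G t) X)) \<longlongrightarrow> mat_coords (Ad g X)) (at 0)"
    using tendsto_mat_coords_Ad[OF segment_to_one_carrier polyfun_segment_to_one _ X_carrier, of g 0] g
    by (simp add: segment_to_one_0)
  show "eventually (\<lambda>t. mat_coords (Ad (?G t) X) \<in> closure (mat_coords ` orbit (Borel n) X)) (at 0)"
    using eventually_Ad_segment_mem_Borel_orbit[OF g]
    by (rule eventually_mono) (intro subsetD[OF closure_subset] imageI)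
qed simp

lemma dense_Borel_orbit_unique:
  assumes Y: "Y \<in> orbit (SL n) X" and sub: "orbit (Borel n) Y \<subseteq> orbit (SL n) X"
    and dense: "mat_dense_in (orbit (Borel n) Y) (orbit (SL n) X)"
  shows "orbit (Borel n) Y = orbit (Borel n) X"
proof -
  let ?U = "{f. \<forall>j\<in>{1..k}. det (lower_left n j (mat n n f :: real mat)) \<noteq> 0}"
  have SL: "g \<in> carrier_mat n n" "det g > 0" if "g \<in> SL n" for g
    using that by (auto simp: SL_def)
  have "X \<in> orbit (SL n) X"
    using Ad_one[OF X_carrier] by (auto simp: orbit_def SL_def intro!: image_eqI[of _ _ "1\<^sub>m n"])
  then have "mat_coords X \<in> closure (mat_coords ` orbit (Borel n) Y)"
    using dense by (auto simp: mat_dense_in_def)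
  moreover have "mat_coords X \<in> ?U"
    using lower_left_X_minor by (simp add: mat_mat_coords[OF X_carrier])
  ultimately have "mat_coords ` orbit (Borel n) Y \<inter> ?U \<noteq> {}"
    using open_lower_left_minors_nonzero[of k n] double_k_le_n
    unfolding closure_iff_nhds_not_empty by auto
  then obtain Y' where Y': "Y' \<in> orbit (Borel n) Y" "mat_coords Y' \<in> ?U" by blast
  obtain g where g: "g \<in> SL n" "Y' = Ad g X" using sub Y'(1) by (auto simp: orbit_def)
  have "Y' \<in> carrier_mat n n" using Ad_carrier SL[OF g(1)] X_carrier g(2) by simp
  then have "Y' \<in> orbit (Borel n) X"
    using Ad_mem_Borel_orbit[OF SL[OF g(1)]] Y'(2) g(2) by (simp add: mat_mat_coords)
  moreover obtain g0 where "g0 \<in> SL n" "Y = Ad g0 X" using Y by (auto simp: orbit_def)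
  then have "Y \<in> carrier_mat n n" using Ad_carrier[of g0 n X] X_carrier by (simp add: SL_def)
  ultimately show ?thesis using Borel.orbits_eq_if_intersect[OF X_carrier _ _ Y'(1)] by blast
qed

end

theorem lemma3p1:
  fixes n k :: nat and eps :: real
  assumes "n \<ge> 4" and "2 \<le> k" and "2 * k \<le> n" and "eps \<in> {1, -1}"
  defines "X \<equiv> Xke n k eps"
  defines "Orb \<equiv> orbit (SL n) X"
  shows "X \<in> sl n
    \<and> orbit (Borel n) X \<subseteq> Orb
    \<and> mat_dense_in (orbit (Borel n) X) Orb
    \<and> (\<forall>Y \<in> Orb. orbit (Borel n) Y \<subseteq> Orb \<and> mat_dense_in (orbit (Borel n) Y) Orb
          \<longrightarrow> orbit (Borel n) Y = orbit (Borel n) X)"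
proof -
  \<comment> \<open>The hypothesis \<open>n \<ge> 4\<close> is implied by \<open>2 \<le> k\<close> and \<open>2 * k \<le> n\<close>.\<close>
  interpret Xke_orbit n k eps using assms(2-4) by unfold_locales
  have "mat_dense_in (orbit (Borel n) X) Orb"
    unfolding mat_dense_in_def Orb_def X_def
    using Ad_mem_closure_Borel_orbit by (auto simp: orbit_def SL_def)
  moreover have "orbit (Borel n) X \<subseteq> Orb"
    unfolding Orb_def orbit_def using Borel_subset_SL by blast
  ultimately show ?thesis
    using X_in_sl dense_Borel_orbit_unique unfolding X_def Orb_def by blast
qed

end
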